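(* Let $A,B\in\mathbb{Z}$ with $|A|\leq B$ and $B\geq 2$. Let $\tilde M\in\mathbb{Z}^{2\times 2}$ have characteristic polynomial $x^2+Ax+B$ and let $\mathbf{v}\in\mathbb{Z}^2$ be such that $(\mathbf{v},\tilde M\mathbf{v})$ is linearly independent. Let $\tilde T$ be the unique nonempty compact set with $$\tilde M\tilde T+\frac{B-1}{2}\mathbf{v}=\tilde T\cup(\tilde T+\mathbf{v})\cup\cdots\cup(\tilde T+(B-2)\mathbf{v})\cup(-\tilde T),$$ and let $T$ be the unique nonempty compact set with $$MT+\begin{pmatrix}\frac{B-1}{2}\\0\end{pmatrix}=T\cup\left(T+\begin{pmatrix}1\\0\end{pmatrix}\right)\cup\cdots\cup\left(T+\begin{pmatrix}B-2\\0\end{pmatrix}\right)\cup(-T),\qquad M=\begin{pmatrix}0&-B\\1&-A\end{pmatrix}.$$ Let $C$ be the change-of-base matrix from the canonical basis to the basis $(\mathbf{v},\tilde M\mathbf{v})$, i.e. the matrix whose columns are $\mathbf{v}$ and $\tilde M\mathbf{v}$. Then $\tilde T=CT$.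
   Context: When $B=2$ the unions on the right-hand sides reduce to $\tilde T\cup(-\tilde T)$ and $T\cup(-T)$ respectively. *)

theory Defs
  imports "HOL-Analysis.Analysis"
begin

end

theory Submission
  imports Defs
begin

text \<open>Conjugation by \<open>C\<close> carries the equation for \<open>T\<close> to the equation for \<open>Tt\<close>: by
  Cayley--Hamilton \<open>C M = Mt C\<close>, and \<open>C\<close> maps \<open>(1, 0)\<close> to \<open>v\<close>. It therefore suffices that the
  equation for \<open>T\<close> has only one nonempty compact solution. Since \<open>|A| \<le> B\<close> and \<open>B \<ge> 2\<close>, both
  roots of \<open>x\<^sup>2 + A x + B\<close> lie outside the unit disc, so \<open>M\<close> expands some even gauge
  \<open>V \<ge> \<kappa> |w|\<^sup>2\<close> by a factor \<open>c > 1\<close>. Every piece of the right-hand side is a translate of \<open>X\<close> or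
  \<open>-X\<close>, so if every point of a solution \<open>X\<close> is within \<open>V\<close>-distance \<open>r\<close> of a solution \<open>Y\<close>, it is
  within \<open>r / c\<close>; iterating gives \<open>X \<subseteq> closure Y = Y\<close>.\<close>

section \<open>Uniqueness of self-affine sets\<close>

text \<open>\<open>V\<close> plays the role of the square of a norm adapted to \<open>f\<close>, in which \<open>f\<close> expands by
  the factor \<open>c\<close>.\<close>

definition expansion_gauge :: "('a::real_normed_vector \<Rightarrow> 'a) \<Rightarrow> real \<Rightarrow> ('a \<Rightarrow> real) \<Rightarrow> bool" where
  "expansion_gauge f c V \<longleftrightarrow> 1 < c \<and> continuous_on UNIV V \<and> (\<forall>w. V (- w) = V w)
     \<and> (\<forall>w. c * V w \<le> V (f w)) \<and> (\<exists>\<kappa>>0. \<forall>w. \<kappa> * norm w ^ 2 \<le> V w)"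

definition digit_pieces :: "('i \<Rightarrow> 'a) \<Rightarrow> 'i set \<Rightarrow> 'a set \<Rightarrow> 'a::ab_group_add set" where
  "digit_pieces d I X = (\<Union>k\<in>I. (\<lambda>x. x + d k) ` X) \<union> uminus ` X"

lemma digit_pieces_approx:
  assumes V_neg: "\<forall>w. V (- w) = V w"
    and approx: "\<forall>x\<in>X. \<exists>y\<in>Y. V (x - y) \<le> r"
    and "z \<in> digit_pieces d I X"
  shows "\<exists>z'\<in>digit_pieces d I Y. V (z - z') \<le> r"
proof -
  consider (shift) k x where "k \<in> I" "x \<in> X" "z = x + d k" | (flip) x where "x \<in> X" "z = - x"
    using \<open>z \<in> digit_pieces d I X\<close> unfolding digit_pieces_def by blast
  then show ?thesis
  proof cases
    case shift
    then obtain y where "y \<in> Y" "V (x - y) \<le> r" using approx by blast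
    then show ?thesis using shift by (intro bexI[of _ "y + d k"]) (auto simp: digit_pieces_def)
  next
    case flip
    then obtain y where "y \<in> Y" "V (x - y) \<le> r" using approx by blast
    then show ?thesis using flip V_neg[rule_format, of "x - y"]
      by (intro bexI[of _ "- y"]) (auto simp: digit_pieces_def)
  qed
qed

lemma self_affine_approx_step:
  fixes f :: "'a::real_normed_vector \<Rightarrow> 'a"
  assumes "linear f" and gauge: "expansion_gauge f c V"
    and X: "(\<lambda>x. f x + t) ` X = digit_pieces d I X"
    and Y: "(\<lambda>x. f x + t) ` Y = digit_pieces d I Y"
    and approx: "\<forall>x\<in>X. \<exists>y\<in>Y. V (x - y) \<le> r"
  shows "\<forall>x\<in>X. \<exists>y\<in>Y. V (x - y) \<le> r / c"
proof
  fix x assume "x \<in> X"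
  then have "f x + t \<in> digit_pieces d I X" unfolding X[symmetric] by (rule imageI)
  moreover have "\<forall>w. V (- w) = V w" using gauge by (simp add: expansion_gauge_def)
  ultimately obtain z where z: "z \<in> digit_pieces d I Y" and close: "V (f x + t - z) \<le> r"
    using digit_pieces_approx[OF _ approx] by blast
  from z obtain y where "y \<in> Y" "z = f y + t" unfolding Y[symmetric] by blast
  have "f x + t - z = f (x - y)" using \<open>z = f y + t\<close> \<open>linear f\<close> by (simp add: linear_diff)
  moreover have "c * V (x - y) \<le> V (f (x - y))" using gauge by (simp add: expansion_gauge_def)
  ultimately have "c * V (x - y) \<le> r" using close by simp
  then have "V (x - y) \<le> r / c" using gauge by (simp add: expansion_gauge_def field_simps)
  then show "\<exists>y\<in>Y. V (x - y) \<le> r / c" using \<open>y \<in> Y\<close> by blast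
qed

lemma expansion_gauge_limit_in_closure:
  assumes gauge: "expansion_gauge f c V" and approx: "\<And>n. \<exists>y\<in>Y. V (x - y) \<le> R / c ^ n"
  shows "x \<in> closure Y"
proof -
  obtain \<kappa> where "0 < \<kappa>" and lower: "\<And>w. \<kappa> * norm w ^ 2 \<le> V w"
    using gauge by (auto simp: expansion_gauge_def)
  obtain y where y: "\<And>n. y n \<in> Y" "\<And>n. V (x - y n) \<le> R / c ^ n"
    using approx by metis
  have "(\<lambda>n. R / c ^ n / \<kappa>) \<longlonglongrightarrow> 0"
    using gauge by (intro tendsto_divide_zero LIMSEQ_divide_realpow_zero) (simp add: expansion_gauge_def)
  from tendsto_real_sqrt[OF this] have "(\<lambda>n. sqrt (R / c ^ n / \<kappa>)) \<longlonglongrightarrow> 0"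
    by simp
  moreover have "norm (y n - x) \<le> sqrt (R / c ^ n / \<kappa>)" for n
  proof -
    have "\<kappa> * norm (y n - x) ^ 2 \<le> R / c ^ n"
      using lower[of "x - y n"] y(2)[of n] by (simp add: norm_minus_commute)
    then have "norm (y n - x) ^ 2 \<le> R / c ^ n / \<kappa>"
      using \<open>0 < \<kappa>\<close> by (metis pos_le_divide_eq mult.commute)
    then show ?thesis by (rule real_le_rsqrt)
  qed
  ultimately have "(\<lambda>n. y n - x) \<longlonglongrightarrow> 0"
    by (metis (no_types, lifting) Lim_null_comparison always_eventually)
  then have "y \<longlonglongrightarrow> x" by (rule LIM_zero_iff[THEN iffD1])
  then show ?thesis using y(1) by (auto simp: closure_sequential)
qed

lemma self_affine_subset:
  fixes f :: "'a::real_normed_vector \<Rightarrow> 'a"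
  assumes "linear f" and gauge: "expansion_gauge f c V"
    and "compact X" "compact Y" "Y \<noteq> {}"
    and X: "(\<lambda>x. f x + t) ` X = digit_pieces d I X"
    and Y: "(\<lambda>x. f x + t) ` Y = digit_pieces d I Y"
  shows "X \<subseteq> Y"
proof
  have "continuous_on UNIV V" using gauge by (simp add: expansion_gauge_def)
  then have "compact (V ` {x - y | x y. x \<in> X \<and> y \<in> Y})"
    by (intro compact_continuous_image compact_differences \<open>compact X\<close> \<open>compact Y\<close>
        continuous_on_subset[OF \<open>continuous_on UNIV V\<close>]) simp
  then obtain R where "\<forall>z\<in>V ` {x - y | x y. x \<in> X \<and> y \<in> Y}. norm z \<le> R"
    by (meson compact_imp_bounded bounded_iff)
  then have R: "V (x - y) \<le> R" if "x \<in> X" "y \<in> Y" for x y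
    using that by (metis (mono_tags, lifting) abs_le_D1 image_eqI mem_Collect_eq real_norm_def)
  have approx: "\<forall>x\<in>X. \<exists>y\<in>Y. V (x - y) \<le> R / c ^ n" for n
  proof (induction n)
    case 0
    from \<open>Y \<noteq> {}\<close> obtain y where "y \<in> Y" by blast
    then show ?case using R by auto
  next
    case (Suc n)
    from self_affine_approx_step[OF \<open>linear f\<close> gauge X Y Suc] show ?case
      by (simp add: mult.commute)
  qed
  fix x assume "x \<in> X"
  then have "x \<in> closure Y" using approx by (intro expansion_gauge_limit_in_closure[OF gauge]) blast
  then show "x \<in> Y" using \<open>compact Y\<close> by (simp add: closure_closed compact_imp_closed)
qed

lemma self_affine_unique:
  fixes f :: "'a::real_normed_vector \<Rightarrow> 'a"
  assumes "linear f" "expansion_gauge f c V"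
    and "X \<noteq> {}" "compact X" "(\<lambda>x. f x + t) ` X = digit_pieces d I X"
    and "Y \<noteq> {}" "compact Y" "(\<lambda>x. f x + t) ` Y = digit_pieces d I Y"
  shows "X = Y"
  using self_affine_subset[OF assms(1,2,4,7,6,5,8)] self_affine_subset[OF assms(1,2,7,4,3,8,5)]
  by (rule equalityI)

lemma self_affine_linear_image:
  assumes "linear h" and intertwine: "\<And>x. h (f x) = g (h x)"
    and "(\<lambda>x. f x + t) ` X = digit_pieces d I X"
  shows "(\<lambda>x. g x + h t) ` h ` X = digit_pieces (\<lambda>k. h (d k)) I (h ` X)"
proof -
  have "(\<lambda>x. g x + h t) ` h ` X = h ` (\<lambda>x. f x + t) ` X"
    by (simp add: image_image intertwine linear_add[OF \<open>linear h\<close>])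
  also have "\<dots> = digit_pieces (\<lambda>k. h (d k)) I (h ` X)"
    unfolding assms(3) digit_pieces_def
    by (simp add: image_Un image_UN image_image linear_add[OF \<open>linear h\<close>] linear_neg[OF \<open>linear h\<close>])
  finally show ?thesis .
qed

lemma self_affine_conjugate_unique:
  fixes C M Mt :: "real^'n^'n"
  assumes "invertible C" and intertwine: "\<And>y. C *v (M *v y) = Mt *v (C *v y)"
    and gauge: "expansion_gauge ((*v) M) c V"
    and "Tt \<noteq> {}" "compact Tt"
      "(\<lambda>x. Mt *v x + C *v s) ` Tt = digit_pieces (\<lambda>k. C *v e k) I Tt"
    and T: "T \<noteq> {}" "compact T" "(\<lambda>x. M *v x + s) ` T = digit_pieces e I T"
  shows "Tt = (*v) C ` T"
proof -
  obtain C' where "C' ** C = mat 1" "C ** C' = mat 1"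
    using \<open>invertible C\<close> by (auto simp: invertible_def)
  then have C'C: "C' *v (C *v x) = x" and CC': "C *v (C' *v x) = x" for x
    by (simp_all add: matrix_vector_mul_assoc)
  have "C' *v (Mt *v x) = M *v (C' *v x)" for x
    using intertwine by (metis C'C CC')
  from self_affine_linear_image[OF matrix_vector_mul_linear this assms(6)]
  have S_eq: "(\<lambda>x. M *v x + s) ` (*v) C' ` Tt = digit_pieces e I ((*v) C' ` Tt)"
    by (simp only: C'C)
  have "compact ((*v) C' ` Tt)"
    by (intro compact_continuous_image \<open>compact Tt\<close> matrix_vector_mult_linear_continuous_on)
  moreover have "(*v) C' ` Tt \<noteq> {}" using \<open>Tt \<noteq> {}\<close> by simp
  ultimately have "(*v) C' ` Tt = T"
    using self_affine_unique[OF matrix_vector_mul_linear gauge _ _ S_eq T] by simp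
  then show ?thesis by (auto simp: image_image CC')
qed

section \<open>An expanding gauge for the companion matrix\<close>

definition companion_matrix :: "real \<Rightarrow> real \<Rightarrow> real^2^2" where
  "companion_matrix a b = vector [vector [0, - b], vector [1, - a]]"

lemma companion_matrix_mult_nth [simp]:
  "(companion_matrix a b *v w) $ 1 = - b * w $ 2"
  "(companion_matrix a b *v w) $ 2 = w $ 1 - a * w $ 2"
  by (simp_all add: companion_matrix_def matrix_vector_mult_def sum_2)

lemma norm_vec2_sq: "norm (w :: real^2)^2 = (w $ 1)^2 + (w $ 2)^2"
  by (simp add: norm_vec_def L2_set_def sum_2)

lemma expansion_gauge_companionI:
  fixes V :: "real \<Rightarrow> real \<Rightarrow> real"
  assumes "1 < c" and "0 < L"
    and "\<And>x y. V (- x) (- y) = V x y"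
    and "\<And>x y. c * V x y \<le> V (- b * y) (x - a * y)"
    and "\<And>x y. x^2 + y^2 \<le> L * V x y"
    and "continuous_on UNIV (\<lambda>w::real^2. V (w $ 1) (w $ 2))"
  shows "expansion_gauge ((*v) (companion_matrix a b)) c (\<lambda>w. V (w $ 1) (w $ 2))"
proof -
  have "1 / L * norm w ^ 2 \<le> V (w $ 1) (w $ 2)" for w :: "real^2"
    using assms(2) assms(5)[of "w $ 1" "w $ 2"] by (simp add: norm_vec2_sq field_simps)
  moreover have "0 < 1 / L" using assms(2) by simp
  ultimately show ?thesis
    unfolding expansion_gauge_def using assms(1,3,4,6)
    by (simp only: vector_uminus_component companion_matrix_mult_nth) blast
qed

lemma power2_add_le: "((p::real) + q)^2 \<le> 2 * p^2 + 2 * q^2"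
proof -
  have "0 \<le> (p - q)^2" by simp
  then show ?thesis by (simp add: power2_eq_square algebra_simps)
qed

lemma companion_gauge_complex:
  fixes a b :: real
  assumes "a^2 < 4 * b" and "1 < b"
  shows "\<exists>c V. expansion_gauge ((*v) (companion_matrix a b)) c V"
proof -
  define V where "V x y = x^2 - a * x * y + b * y^2" for x y :: real
  define \<delta> where "\<delta> = b - a^2 / 4"
  define L where "L = 2 + (a^2 / 2 + 1) / \<delta>"
  have \<delta>: "0 < \<delta>" using assms(1) by (simp add: \<delta>_def)
  have V_sq: "V x y = (x - a * y / 2)^2 + \<delta> * y^2" for x y
    by (simp add: V_def \<delta>_def power2_eq_square algebra_simps)
  have lower: "x^2 + y^2 \<le> L * V x y" for x y
  proof -
    define u where "u = x - a * y / 2"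
    have "x^2 \<le> 2 * u^2 + a^2 * y^2 / 2"
      using power2_add_le[of u "a * y / 2"] by (simp add: u_def power_mult_distrib power_divide)
    also have "\<dots> + y^2 = 2 * u^2 + (a^2 / 2 + 1) / \<delta> * (\<delta> * y^2)"
      using \<delta> by (simp add: field_simps)
    also have "\<dots> \<le> L * u^2 + L * (\<delta> * y^2)"
      using \<delta> by (intro add_mono mult_right_mono) (auto simp: L_def)
    finally show ?thesis by (simp add: V_sq u_def distrib_left)
  qed
  have cont: "continuous_on UNIV (\<lambda>w::real^2. V (w $ 1) (w $ 2))"
    unfolding V_def by (intro continuous_intros)
  have "expansion_gauge ((*v) (companion_matrix a b)) b (\<lambda>w. V (w $ 1) (w $ 2))"
  proof (rule expansion_gauge_companionI[OF assms(2) _ _ _ lower cont])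
    show "0 < L" using \<delta> by (simp add: L_def add_pos_nonneg)
    show "V (- x) (- y) = V x y" "b * V x y \<le> V (- b * y) (x - a * y)" for x y
      by (simp_all add: V_def power2_eq_square algebra_simps)
  qed
  then show ?thesis by blast
qed

lemma sum_sq_le_eigen_coordinates:
  fixes l1 l2 x y :: real
  assumes "l1 \<noteq> l2"
  shows "x^2 + y^2 \<le> (2 + (4 * l1^2 + 2) / (l1 - l2)^2) * ((x + l1 * y)^2 + (x + l2 * y)^2)"
proof -
  define p q where "p = x + l1 * y" and "q = x + l2 * y"
  define W where "W = (p^2 + q^2) / (l1 - l2)^2"
  define L where "L = 2 + (4 * l1^2 + 2) / (l1 - l2)^2"
  have d: "0 < (l1 - l2)^2" using assms by simp
  have "y = (p - q) / (l1 - l2)" using assms by (simp add: p_def q_def field_simps)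
  then have "y^2 = (p - q)^2 / (l1 - l2)^2" by (simp add: power_divide)
  also have "\<dots> \<le> (2 * p^2 + 2 * q^2) / (l1 - l2)^2"
    using power2_add_le[of p "- q"] d by (intro divide_right_mono) auto
  finally have y: "y^2 \<le> 2 * W" by (simp add: W_def)
  have "x^2 \<le> 2 * p^2 + 2 * (l1^2 * y^2)"
    using power2_add_le[of p "- l1 * y"] by (simp add: p_def power_mult_distrib)
  moreover have "l1^2 * y^2 \<le> 2 * (l1^2 * W)"
    using mult_left_mono[OF y, of "l1^2"] by simp
  moreover have "L * (p^2 + q^2) = 2 * (p^2 + q^2) + 4 * (l1^2 * W) + 2 * W"
    using d by (simp add: L_def W_def field_simps)
  moreover have "0 \<le> q^2" by simp
  ultimately have "x^2 + y^2 \<le> L * (p^2 + q^2)" using y by (smt (verit))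
  then show ?thesis by (simp add: L_def p_def q_def)
qed

lemma companion_gauge_real_distinct:
  fixes a b l1 l2 :: real
  assumes vieta: "l1 + l2 = - a" "l1 * l2 = b" and "l1 \<noteq> l2"
    and roots: "1 < l1^2" "1 < l2^2"
  shows "\<exists>c V. expansion_gauge ((*v) (companion_matrix a b)) c V"
proof -
  define V where "V x y = (x + l1 * y)^2 + (x + l2 * y)^2" for x y :: real
  define c where "c = min (l1^2) (l2^2)"
  define L where "L = 2 + (4 * l1^2 + 2) / (l1 - l2)^2"
  have eigen: "- b * y + l * (x - a * y) = l * (x + l * y)" if "l = l1 \<or> l = l2" for l x y
  proof -
    have a_sum: "a = - (l1 + l2)" using vieta(1) by simp
    have "l^2 + a * l + b = 0"
      using that unfolding a_sum vieta(2)[symmetric] by (auto simp: power2_eq_square algebra_simps)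
    then have b_eq: "b = - (l^2) - a * l" by simp
    show ?thesis unfolding b_eq by (simp add: power2_eq_square algebra_simps)
  qed
  have expand: "c * V x y \<le> V (- b * y) (x - a * y)" for x y
  proof -
    have "V (- b * y) (x - a * y) = l1^2 * (x + l1 * y)^2 + l2^2 * (x + l2 * y)^2"
      using eigen[of l1] eigen[of l2] by (simp add: V_def power_mult_distrib)
    moreover have "c * (x + l1 * y)^2 \<le> l1^2 * (x + l1 * y)^2"
      and "c * (x + l2 * y)^2 \<le> l2^2 * (x + l2 * y)^2"
      by (intro mult_right_mono; simp add: c_def)+
    ultimately show ?thesis by (simp add: V_def distrib_left)
  qed
  have lower: "x^2 + y^2 \<le> L * V x y" for x y
    unfolding L_def V_def using \<open>l1 \<noteq> l2\<close> by (rule sum_sq_le_eigen_coordinates)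
  have cont: "continuous_on UNIV (\<lambda>w::real^2. V (w $ 1) (w $ 2))"
    unfolding V_def by (intro continuous_intros)
  have "expansion_gauge ((*v) (companion_matrix a b)) c (\<lambda>w. V (w $ 1) (w $ 2))"
  proof (rule expansion_gauge_companionI[OF _ _ _ expand lower cont])
    show "1 < c" using roots by (simp add: c_def)
    show "0 < L" by (simp add: L_def add_pos_nonneg)
    show "V (- x) (- y) = V x y" for x y by (simp add: V_def power2_eq_square algebra_simps)
  qed
  then show ?thesis by blast
qed

text \<open>For a double root \<open>l\<close> the companion matrix is a Jordan block, so no quadratic form is
  expanded; in the max-form below the term \<open>y\<^sup>2 / 4\<close> absorbs the nilpotent part.\<close>

lemma jordan_max_form_expands:
  fixes l p y :: real
  assumes "4 \<le> l^2"
  shows "9/4 * max (p^2) (y^2 / 4) \<le> max ((l * p)^2) ((p + l * y)^2 / 4)"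
proof (cases "y^2 / 4 \<le> p^2")
  case True
  have "4 * p^2 \<le> l^2 * p^2" using assms by (intro mult_right_mono) auto
  moreover have "(l * p)^2 = l^2 * p^2" by (simp add: power_mult_distrib)
  moreover have "0 \<le> p^2" by simp
  moreover have "max (p^2) (y^2 / 4) = p^2" using True by simp
  moreover have "(l * p)^2 \<le> max ((l * p)^2) ((p + l * y)^2 / 4)" by simp
  ultimately show ?thesis by linarith
next
  case False
  then have "p^2 \<le> (\<bar>y\<bar> / 2)^2" by (simp add: power_divide)
  then have "\<bar>p\<bar> \<le> \<bar>y\<bar> / 2" using abs_le_square_iff[of p "\<bar>y\<bar> / 2"] by simp
  moreover have "2 \<le> \<bar>l\<bar>" using assms abs_le_square_iff[of 2 l] by simp
  then have "2 * \<bar>y\<bar> \<le> \<bar>l * y\<bar>" by (simp add: abs_mult mult_right_mono)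
  ultimately have "3/2 * \<bar>y\<bar> \<le> \<bar>p + l * y\<bar>" by linarith
  then have "(3/2 * \<bar>y\<bar>)^2 \<le> (p + l * y)^2"
    using power_mono[of "3/2 * \<bar>y\<bar>" "\<bar>p + l * y\<bar>" 2] by simp
  moreover have "(3/2 * \<bar>y\<bar>)^2 = 9/4 * y^2" by (simp add: power2_eq_square)
  moreover have "max (p^2) (y^2 / 4) = y^2 / 4" using False by simp
  moreover have "(p + l * y)^2 / 4 \<le> max ((l * p)^2) ((p + l * y)^2 / 4)" by simp
  ultimately show ?thesis by linarith
qed

lemma companion_gauge_double:
  fixes a b l :: real
  assumes "a = - 2 * l" "b = l^2" and "4 \<le> l^2"
  shows "\<exists>c V. expansion_gauge ((*v) (companion_matrix a b)) c V"
proof -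
  define V where "V x y = max ((x + l * y)^2) (y^2 / 4)" for x y :: real
  have expand: "9/4 * V x y \<le> V (- b * y) (x - a * y)" for x y
  proof -
    define p where "p = x + l * y"
    have "- b * y + l * (x - a * y) = l * p" "x - a * y = p + l * y"
      unfolding assms p_def by (simp_all add: power2_eq_square algebra_simps)
    then have V': "V (- b * y) (x - a * y) = max ((l * p)^2) ((p + l * y)^2 / 4)"
      by (simp add: V_def)
    have "9/4 * V x y \<le> max ((l * p)^2) ((p + l * y)^2 / 4)"
      unfolding V_def p_def by (rule jordan_max_form_expands[OF \<open>4 \<le> l^2\<close>])
    then show ?thesis unfolding V' .
  qed
  have lower: "x^2 + y^2 \<le> (6 + 8 * b) * V x y" for x y
  proof -
    have "(x + l * y)^2 \<le> V x y" "y^2 \<le> 4 * V x y" by (auto simp: V_def)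
    moreover have "x^2 \<le> 2 * (x + l * y)^2 + 2 * (l^2 * y^2)"
      using power2_add_le[of "x + l * y" "- l * y"] by (simp add: power_mult_distrib)
    moreover have "l^2 * y^2 \<le> l^2 * (4 * V x y)"
      using \<open>y^2 \<le> 4 * V x y\<close> by (intro mult_left_mono) auto
    moreover have "(6 + 8 * b) * V x y = 6 * V x y + 8 * (l^2 * V x y)"
      unfolding assms by (simp add: algebra_simps)
    ultimately show ?thesis by linarith
  qed
  have cont: "continuous_on UNIV (\<lambda>w::real^2. V (w $ 1) (w $ 2))"
    unfolding V_def by (intro continuous_intros) simp
  have "expansion_gauge ((*v) (companion_matrix a b)) (9/4) (\<lambda>w. V (w $ 1) (w $ 2))"
  proof (rule expansion_gauge_companionI[OF _ _ _ expand lower cont])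
    show "0 < 6 + 8 * b" using assms(2) by (simp add: add_pos_nonneg)
    show "V (- x) (- y) = V x y" for x y by (simp add: V_def power2_eq_square algebra_simps)
  qed simp
  then show ?thesis by blast
qed

lemma root_sq_gt_1:
  fixes l m a b :: real
  assumes "l + m = - a" "l * m = b" "\<bar>a\<bar> \<le> b" "1 \<le> b"
  shows "1 < l^2"
proof (rule ccontr)
  assume "\<not> 1 < l^2"
  then have l: "\<bar>l\<bar> \<le> 1" by (simp add: abs_square_le_1[symmetric])
  have "(1 - l) * (1 - m) = 1 - (l + m) + l * m" "(1 + l) * (1 + m) = 1 + (l + m) + l * m"
    by (simp_all add: algebra_simps)
  then have "0 < (1 - l) * (1 - m)" "0 < (1 + l) * (1 + m)"
    using assms by auto
  with l have "0 < 1 - m" "0 < 1 + m"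
    by (auto simp: zero_less_mult_iff)
  moreover have "\<bar>l * m\<bar> \<le> \<bar>m\<bar>" using l by (simp add: abs_mult mult_left_le_one_le)
  ultimately show False using assms by auto
qed

lemma companion_expansion_gauge:
  fixes a b :: real
  assumes "\<bar>a\<bar> \<le> b" "1 < b"
  shows "\<exists>c V. expansion_gauge ((*v) (companion_matrix a b)) c V"
proof (cases "a^2 < 4 * b")
  case True
  then show ?thesis using companion_gauge_complex assms(2) by blast
next
  case False
  define s where "s = sqrt (a^2 - 4 * b)"
  define l1 l2 where "l1 = (- a + s) / 2" and "l2 = (- a - s) / 2"
  have s: "s^2 = a^2 - 4 * b" using False by (simp add: s_def)
  have vieta: "l1 + l2 = - a" "l1 * l2 = b"
    using s by (simp_all add: l1_def l2_def power2_eq_square field_simps)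
  have roots: "1 < l1^2" "1 < l2^2"
    using root_sq_gt_1[of l1 l2 a b] root_sq_gt_1[of l2 l1 a b] vieta assms
    by (simp_all add: algebra_simps)
  show ?thesis
  proof (cases "s = 0")
    case True
    then have "a = - 2 * l1" "b = l1^2" using vieta by (auto simp: l1_def l2_def power2_eq_square)
    moreover have "4 \<le> l1^2"
    proof -
      have "4 * b \<le> b * b"
        using s True assms abs_le_square_iff[of a b] by (simp add: power2_eq_square)
      then have "4 \<le> b" using assms(2) by simp
      then show ?thesis using \<open>b = l1^2\<close> by simp
    qed
    ultimately show ?thesis by (rule companion_gauge_double)
  next
    case False
    then have "l1 \<noteq> l2" by (simp add: l1_def l2_def)
    then show ?thesis using companion_gauge_real_distinct[OF vieta _ roots] by blast
  qed
qed

section \<open>Conjugation to the companion matrix\<close>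

lemma cayley_hamilton_2:
  fixes M :: "real^2^2"
  assumes charpoly: "\<forall>x. det (mat x - M) = x^2 + a * x + b"
  shows "M *v (M *v w) + a *\<^sub>R (M *v w) + b *\<^sub>R w = 0"
proof -
  have det: "det (mat x - M) = (x - M$1$1) * (x - M$2$2) - M$1$2 * M$2$1" for x
    by (simp add: det_2 mat_def)
  have b: "b = M$1$1 * M$2$2 - M$1$2 * M$2$1"
    using charpoly[rule_format, of 0] det[of 0] by simp
  have a: "a = - (M$1$1 + M$2$2)"
    using charpoly[rule_format, of 1] det[of 1] b by (simp add: algebra_simps)
  show ?thesis
    unfolding a b by (simp add: vec_eq_iff forall_2 matrix_vector_mult_def sum_2 algebra_simps)
qed

definition column_matrix :: "real^2 \<Rightarrow> real^2 \<Rightarrow> real^2^2" where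
  "column_matrix v u = (\<chi> i j. if j = 1 then v $ i else u $ i)"

lemma column_matrix_mult: "column_matrix v u *v w = w $ 1 *\<^sub>R v + w $ 2 *\<^sub>R u"
  by (simp add: column_matrix_def vec_eq_iff forall_2 matrix_vector_mult_def sum_2 mult.commute)

lemma column_matrix_invertible:
  assumes indep: "\<forall>a b. a *\<^sub>R v + b *\<^sub>R u = 0 \<longrightarrow> a = 0 \<and> b = 0"
  shows "invertible (column_matrix v u)"
proof -
  have "x = 0" if "column_matrix v u *v x = 0" for x
  proof -
    have "x $ 1 = 0 \<and> x $ 2 = 0" using indep that by (simp add: column_matrix_mult)
    then show "x = 0" by (simp add: vec_eq_iff forall_2)
  qed
  then show ?thesis using invertible_left_inverse matrix_left_invertible_ker by blast
qed

lemma column_matrix_intertwines_companion: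
  fixes M :: "real^2^2"
  assumes "M *v (M *v v) + a *\<^sub>R (M *v v) + b *\<^sub>R v = 0"
  shows "column_matrix v (M *v v) *v (companion_matrix a b *v w) = M *v (column_matrix v (M *v v) *v w)"
proof -
  have MMv: "M *v (M *v v) = - (a *\<^sub>R (M *v v) + b *\<^sub>R v)"
    using assms by (intro eq_neg_iff_add_eq_0[THEN iffD2]) (simp only: add.assoc)
  have "column_matrix v (M *v v) *v (companion_matrix a b *v w)
      = (- b * w $ 2) *\<^sub>R v + (w $ 1 - a * w $ 2) *\<^sub>R (M *v v)"
    by (simp only: column_matrix_mult companion_matrix_mult_nth)
  also have "\<dots> = w $ 1 *\<^sub>R (M *v v) + w $ 2 *\<^sub>R (M *v (M *v v))"
    unfolding MMv by (simp add: algebra_simps)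
  also have "\<dots> = M *v (column_matrix v (M *v v) *v w)"
    by (simp only: column_matrix_mult matrix_vector_right_distrib matrix_vector_mult_scaleR)
  finally show ?thesis .
qed

theorem lemma2p3:
  fixes A B :: int
    and Mt :: "real^2^2" and v :: "real^2"
    and Tt T :: "(real^2) set"
  assumes AB: "\<bar>A\<bar> \<le> B" "B \<ge> 2"
    and Mt_int: "\<forall>i j. Mt $ i $ j \<in> \<int>"
    and charpoly: "\<forall>x::real. det (mat x - Mt) = x^2 + of_int A * x + of_int B"
    and v_int: "\<forall>i. v $ i \<in> \<int>"
    and indep: "\<forall>a b::real. a *\<^sub>R v + b *\<^sub>R (Mt *v v) = 0 \<longrightarrow> a = 0 \<and> b = 0"
    and Tt: "Tt \<noteq> {}" "compact Tt"
      "(\<lambda>x. Mt *v x + ((of_int B - 1) / 2) *\<^sub>R v) ` Tt =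
         (\<Union>k\<in>{0..B-2}. (\<lambda>x. x + of_int k *\<^sub>R v) ` Tt) \<union> uminus ` Tt"
    and T: "T \<noteq> {}" "compact T"
      "(\<lambda>x. (vector [vector [0, - of_int B], vector [1, - of_int A]] :: real^2^2) *v x
             + vector [(of_int B - 1) / 2, 0]) ` T =
         (\<Union>k\<in>{0..B-2}. (\<lambda>x. x + vector [of_int k, 0]) ` T) \<union> uminus ` T"
  shows "Tt = (\<lambda>x. ((\<chi> i j. if j = 1 then v $ i else (Mt *v v) $ i) :: real^2^2) *v x) ` T"
proof -
  define M where "M = companion_matrix (of_int A) (of_int B)"
  define C where "C = column_matrix v (Mt *v v)"
  have C_e1: "C *v vector [r, 0] = r *\<^sub>R v" for r
    by (simp add: C_def column_matrix_mult)
  have intertwine: "C *v (M *v y) = Mt *v (C *v y)" for y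
    unfolding C_def M_def by (rule column_matrix_intertwines_companion[OF cayley_hamilton_2[OF charpoly]])
  have "\<bar>real_of_int A\<bar> \<le> of_int B" "1 < real_of_int B" using AB by linarith+
  then obtain c V where gauge: "expansion_gauge ((*v) M) c V"
    unfolding M_def using companion_expansion_gauge by blast
  have Tt_eq: "(\<lambda>x. Mt *v x + C *v vector [(of_int B - 1) / 2, 0]) ` Tt
      = digit_pieces (\<lambda>k. C *v vector [of_int k, 0]) {0..B-2} Tt"
    using Tt(3) by (simp add: C_e1 digit_pieces_def)
  have T_eq: "(\<lambda>x. M *v x + vector [(of_int B - 1) / 2, 0]) ` T
      = digit_pieces (\<lambda>k. vector [of_int k, 0]) {0..B-2} T"
    using T(3) by (simp add: M_def companion_matrix_def digit_pieces_def)
  have "Tt = (*v) C ` T"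
    by (rule self_affine_conjugate_unique[OF column_matrix_invertible[OF indep, folded C_def]
          intertwine gauge Tt(1,2) Tt_eq T(1,2) T_eq])
  then show ?thesis by (simp add: C_def column_matrix_def)
qed

end
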